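(* Let $d\ge1$, $n\ge2$ be integers, $\kappa_d$ the volume of the $d$-dimensional unit ball, $V\ge0$, $-d/2<\tau_1<\dots<\tau_n$ reals, $x_i=\tau_i+d/2$, and let $\Sigma_n$ have entries $\frac{Vd\kappa_d}{2(x_i+x_j)}$, with eigenvalues $\lambda_1\le\dots\le\lambda_n$. Put $Q=\sum_{l=1}^n\sum_{k=1}^n\frac{n}{(x_k+x_l)^2}-\Big(\sum_{i=1}^n\frac{1}{2x_i}\Big)^2$ and $$\bar S_n=\frac{Vd\kappa_d\Big(\sum_{i=1}^n\frac1{2x_i}+\sqrt{(n-1)Q}\Big)}{2n},\qquad \underline S_n=\frac{Vd\kappa_d\prod_{1\le i<j\le n}(x_i-x_j)^2}{2\prod_{1\le i,j\le n}(x_i+x_j)\Big(\frac{\sum_{i=1}^n\frac{\sqrt{n-1}}{2x_i}+\sqrt Q}{n\sqrt{n-1}}\Big)^{n-1}}.$$ Then $\underline S_n\le\lambda_1\le\dots\le\lambda_n\le\bar S_n$.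
   Context: $\Sigma_n$ is the asymptotic covariance matrix of normalized length power functionals in the subcritical regime. *)

theory Defs
  imports "HOL-Analysis.Ball_Volume" "Jordan_Normal_Form.Char_Poly"
begin

(* Sigma_n as an n x n real matrix (indices 0..n-1), entries V d kappa_d / (2 (x_i + x_j)),
   x_i = tau_i + d/2, kappa_d = unit_ball_vol d (volume of the d-dimensional unit ball). *)
definition Sigma_mat :: "nat \<Rightarrow> nat \<Rightarrow> real \<Rightarrow> (nat \<Rightarrow> real) \<Rightarrow> real mat" where
  "Sigma_mat d n V \<tau> = mat n n (\<lambda>(i,j).
      V * real d * unit_ball_vol (real d) / (2 * ((\<tau> i + real d / 2) + (\<tau> j + real d / 2))))"

end

theory Submission
  imports Defs
begin

text \<open>
  Write \<open>\<Sigma>\<^sub>n = c C\<close> with \<open>c = V d \<kappa>\<^sub>d / 2\<close> and \<open>C\<close> the Cauchy matrix \<open>1 / (x\<^sub>i + x\<^sub>j)\<close>.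
  Eliminating \<open>x\<^sub>0\<close> from a Cauchy matrix leaves a Cauchy matrix in the remaining points,
  rescaled by \<open>(x\<^sub>i - x\<^sub>0) / (x\<^sub>i + x\<^sub>0)\<close>; by induction \<open>C\<close> is positive semidefinite and has
  Cauchy's determinant \<open>\<Prod>\<^bsub>i<j\<^esub> (x\<^sub>i - x\<^sub>j)\<^sup>2 / \<Prod>\<^bsub>i,j\<^esub> (x\<^sub>i + x\<^sub>j)\<close>.

  For a symmetric positive semidefinite \<open>A\<close> with trace \<open>T\<close>, every eigenvalue \<open>\<mu>\<close> satisfies
  the Wolkowicz-Styan bound \<open>(n \<mu> - T)\<^sup>2 \<le> (n - 1) (n \<parallel>A\<parallel>\<^sub>F\<^sup>2 - T\<^sup>2)\<close>, which is
  Cauchy-Schwarz; it gives the upper bound. Conjugating \<open>A\<close> by the Householder reflection that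
  maps \<open>e\<^sub>0\<close> to a unit eigenvector splits off \<open>\<mu>\<close>: \<open>det A = \<mu> det B\<close> with \<open>B\<close> positive
  semidefinite of trace \<open>T - \<mu>\<close>. Hadamard's inequality and AM-GM give
  \<open>det B \<le> ((T - \<mu>) / (n - 1))\<^bsup>n-1\<^esup>\<close>, and the Wolkowicz-Styan lower estimate of \<open>\<mu>\<close>
  turns this into the lower bound.

  Matrices are entry functions on \<open>{0..<n}\<^sup>2\<close>, which keeps the index shifts of Schur complements
  and deflation elementary; \<open>mat_fun\<close> converts them to matrices of \<open>Jordan_Normal_Form\<close>
  for determinants and eigenvalues.
\<close>

definition mat_fun :: "nat \<Rightarrow> (nat \<Rightarrow> nat \<Rightarrow> 'a) \<Rightarrow> 'a mat" where
  "mat_fun n a = mat n n (\<lambda>(i, j). a i j)"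

definition quad_form :: "nat \<Rightarrow> (nat \<Rightarrow> nat \<Rightarrow> 'a::comm_semiring_1) \<Rightarrow> (nat \<Rightarrow> 'a) \<Rightarrow> 'a" where
  "quad_form n a y = (\<Sum>i<n. \<Sum>j<n. a i j * y i * y j)"

definition psd_fun :: "nat \<Rightarrow> (nat \<Rightarrow> nat \<Rightarrow> 'a::linordered_idom) \<Rightarrow> bool" where
  "psd_fun n a \<longleftrightarrow> (\<forall>y. 0 \<le> quad_form n a y)"

definition sym_fun :: "nat \<Rightarrow> (nat \<Rightarrow> nat \<Rightarrow> 'a) \<Rightarrow> bool" where
  "sym_fun n a \<longleftrightarrow> (\<forall>i<n. \<forall>j<n. a i j = a j i)"

definition schur_compl :: "(nat \<Rightarrow> nat \<Rightarrow> 'a::field) \<Rightarrow> nat \<Rightarrow> nat \<Rightarrow> 'a" where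
  "schur_compl a i j = a (Suc i) (Suc j) - a (Suc i) 0 * a 0 (Suc j) / a 0 0"

lemma mat_fun_carrier [simp]: "mat_fun n a \<in> carrier_mat n n"
  and dim_row_mat_fun [simp]: "dim_row (mat_fun n a) = n"
  and dim_col_mat_fun [simp]: "dim_col (mat_fun n a) = n"
  and index_mat_fun [simp]: "i < n \<Longrightarrow> j < n \<Longrightarrow> mat_fun n a $$ (i, j) = a i j"
  by (auto simp: mat_fun_def)

lemma index_mult_mat_fun:
  "i < n \<Longrightarrow> j < n \<Longrightarrow> (mat_fun n a * mat_fun n b) $$ (i, j) = (\<Sum>k<n. a i k * b k j)"
  by (simp add: scalar_prod_def lessThan_atLeast0)

lemma mat_fun_cong: "(\<And>i j. i < n \<Longrightarrow> j < n \<Longrightarrow> a i j = b i j) \<Longrightarrow> mat_fun n a = mat_fun n b"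
  by (rule eq_matI) auto

lemma quad_form_cong: "(\<And>i j. i < n \<Longrightarrow> j < n \<Longrightarrow> a i j = b i j) \<Longrightarrow> quad_form n a y = quad_form n b y"
  unfolding quad_form_def by (intro sum.cong refl) auto

lemma sum_of_bool_eq_mult [simp]:
  fixes f :: "nat \<Rightarrow> 'a::semiring_1"
  assumes "i < n"
  shows "(\<Sum>k<n. of_bool (i = k) * f k) = f i" and "(\<Sum>k<n. f k * of_bool (k = i)) = f i"
  using assms by (simp_all add: of_bool_def if_distrib if_distribR sum.delta sum.delta' cong: if_cong)

section \<open>Schur complements and Hadamard's inequality\<close>

lemma det_mat_fun_first_col:
  fixes a :: "nat \<Rightarrow> nat \<Rightarrow> 'a::comm_ring_1"
  assumes "\<And>i. 0 < i \<Longrightarrow> i < Suc n \<Longrightarrow> a i 0 = 0"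
  shows "det (mat_fun (Suc n) a) = a 0 0 * det (mat_fun n (\<lambda>i j. a (Suc i) (Suc j)))"
proof -
  let ?A = "mat_fun (Suc n) a"
  have "det ?A = (\<Sum>i<Suc n. ?A $$ (i, 0) * cofactor ?A i 0)"
    by (rule laplace_expansion_column) auto
  also have "\<dots> = a 0 0 * cofactor ?A 0 0"
    by (subst sum.lessThan_Suc_shift) (simp add: assms)
  also have "cofactor ?A 0 0 = det (mat_delete ?A 0 0)"
    by (simp add: cofactor_def)
  also have "mat_delete ?A 0 0 = mat_fun n (\<lambda>i j. a (Suc i) (Suc j))"
    by (rule eq_matI) (auto simp: mat_delete_def)
  finally show ?thesis .
qed

text \<open>Subtracting multiples of row 0 clears the first column and leaves the Schur complement.\<close>
lemma det_schur_compl: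
  fixes a :: "nat \<Rightarrow> nat \<Rightarrow> 'a::field"
  assumes a0: "a 0 0 \<noteq> 0"
  shows "det (mat_fun (Suc n) a) = a 0 0 * det (mat_fun n (schur_compl a))"
proof -
  define e where "e i k = (if i = k then 1 else 0) - (if k = 0 \<and> i \<noteq> 0 then a i 0 / a 0 0 else 0)"
    for i k
  define m where "m i j = a i j - (if i \<noteq> 0 then a i 0 / a 0 0 * a 0 j else 0)" for i j
  have "det (mat_fun (Suc n) e) = prod_list (diag_mat (mat_fun (Suc n) e))"
    by (rule det_lower_triangular[of "Suc n"]) (auto simp: e_def)
  also have "\<dots> = 1"
    by (auto simp: diag_mat_def e_def intro!: prod_list_neutral)
  finally have det_e: "det (mat_fun (Suc n) e) = 1" .
  have "mat_fun (Suc n) e * mat_fun (Suc n) a = mat_fun (Suc n) m"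
  proof (rule eq_matI)
    fix i j assume "i < dim_row (mat_fun (Suc n) m)" "j < dim_col (mat_fun (Suc n) m)"
    then have ij: "i < Suc n" "j < Suc n" by auto
    have "(mat_fun (Suc n) e * mat_fun (Suc n) a) $$ (i, j) = (\<Sum>k<Suc n. e i k * a k j)"
      by (rule index_mult_mat_fun[OF ij])
    also have "\<dots> = (\<Sum>k<Suc n. (if i = k then a k j else 0)
        - (if k = 0 \<and> i \<noteq> 0 then a i 0 / a 0 0 * a k j else 0))"
      by (rule sum.cong) (auto simp: e_def)
    also have "\<dots> = m i j"
      using ij by (simp add: sum_subtractf m_def)
    finally show "(mat_fun (Suc n) e * mat_fun (Suc n) a) $$ (i, j) = mat_fun (Suc n) m $$ (i, j)"
      using ij by simp
  qed auto
  then have "det (mat_fun (Suc n) a) = det (mat_fun (Suc n) m)"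
    using det_mult[of "mat_fun (Suc n) e" "Suc n" "mat_fun (Suc n) a"] det_e by simp
  also have "\<dots> = a 0 0 * det (mat_fun n (schur_compl a))"
    by (subst det_mat_fun_first_col) (auto simp: m_def a0 schur_compl_def intro!: arg_cong[where f = det] mat_fun_cong)
  finally show ?thesis .
qed

lemma quad_form_Suc:
  "quad_form (Suc n) a y = a 0 0 * y 0 * y 0 + y 0 * (\<Sum>j<n. a 0 (Suc j) * y (Suc j))
     + y 0 * (\<Sum>i<n. a (Suc i) 0 * y (Suc i)) + quad_form n (\<lambda>i j. a (Suc i) (Suc j)) (\<lambda>i. y (Suc i))"
  unfolding quad_form_def sum.lessThan_Suc_shift
  by (simp add: sum.distrib sum_distrib_left algebra_simps)

lemma quad_form_schur_compl:
  fixes a :: "nat \<Rightarrow> nat \<Rightarrow> 'a::field"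
  assumes s: "sym_fun (Suc n) a" and a0: "a 0 0 \<noteq> 0"
  shows "quad_form (Suc n) a y = a 0 0 * (y 0 + (\<Sum>j<n. a 0 (Suc j) * y (Suc j)) / a 0 0)\<^sup>2
           + quad_form n (schur_compl a) (\<lambda>i. y (Suc i))"
proof -
  define L where "L = (\<Sum>j<n. a 0 (Suc j) * y (Suc j))"
  have L': "(\<Sum>i<n. a (Suc i) 0 * y (Suc i)) = L"
    unfolding L_def by (rule sum.cong) (use s in \<open>auto simp: sym_fun_def\<close>)
  have "quad_form n (schur_compl a) (\<lambda>i. y (Suc i))
      = quad_form n (\<lambda>i j. a (Suc i) (Suc j)) (\<lambda>i. y (Suc i))
        - (\<Sum>i<n. \<Sum>j<n. (a (Suc i) 0 * y (Suc i)) * (a 0 (Suc j) * y (Suc j)) / a 0 0)"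
    unfolding quad_form_def schur_compl_def by (simp add: sum_subtractf algebra_simps)
  also have "(\<Sum>i<n. \<Sum>j<n. (a (Suc i) 0 * y (Suc i)) * (a 0 (Suc j) * y (Suc j)) / a 0 0)
      = (\<Sum>i<n. a (Suc i) 0 * y (Suc i)) * L / a 0 0"
    unfolding L_def by (simp only: sum_product sum_divide_distrib)
  finally have "quad_form n (schur_compl a) (\<lambda>i. y (Suc i))
      = quad_form n (\<lambda>i j. a (Suc i) (Suc j)) (\<lambda>i. y (Suc i)) - L * L / a 0 0"
    using L' by simp
  moreover have "a 0 0 * (y 0 + L / a 0 0)\<^sup>2 = a 0 0 * y 0 * y 0 + 2 * y 0 * L + L * L / a 0 0"
    using a0 by (simp add: power2_eq_square field_simps)
  ultimately show ?thesis
    unfolding quad_form_Suc L' L_def[symmetric] by simp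
qed

lemma sym_schur_compl: "sym_fun (Suc n) a \<Longrightarrow> sym_fun n (schur_compl a)"
  by (auto simp: sym_fun_def schur_compl_def)

lemma psd_schur_compl:
  fixes a :: "nat \<Rightarrow> nat \<Rightarrow> 'a::linordered_field"
  assumes p: "psd_fun (Suc n) a" and s: "sym_fun (Suc n) a" and a0: "a 0 0 \<noteq> 0"
  shows "psd_fun n (schur_compl a)"
  unfolding psd_fun_def
proof
  fix y :: "nat \<Rightarrow> 'a"
  define z where "z = case_nat (- (\<Sum>j<n. a 0 (Suc j) * y j) / a 0 0) y"
  have "0 \<le> quad_form (Suc n) a z"
    using p by (simp add: psd_fun_def)
  also have "\<dots> = quad_form n (schur_compl a) y"
    unfolding quad_form_schur_compl[OF s a0] by (simp add: z_def)
  finally show "0 \<le> quad_form n (schur_compl a) y" .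
qed

lemma quad_form_unit_vec:
  assumes "i < n"
  shows "quad_form n a (\<lambda>k. if k = i then 1 else 0) = a i i"
proof -
  have "quad_form n a (\<lambda>k. if k = i then 1 else 0)
      = (\<Sum>k<n. \<Sum>l<n. if k = i then (if l = i then a k l else 0) else 0)"
    unfolding quad_form_def by (intro sum.cong) auto
  also have "\<dots> = (\<Sum>k<n. if k = i then (\<Sum>l<n. if l = i then a k l else 0) else 0)"
    by (intro sum.cong) auto
  also have "\<dots> = a i i"
    using assms by simp
  finally show ?thesis .
qed

lemma psd_diag_nonneg: "psd_fun n a \<Longrightarrow> i < n \<Longrightarrow> 0 \<le> a i i"
  by (metis psd_fun_def quad_form_unit_vec)

lemma quad_form_two_point:
  assumes "p < n" "q < n" "p \<noteq> q"
  shows "quad_form n a (\<lambda>k. if k = p then s else if k = q then t else 0)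
     = s * s * a p p + s * t * (a p q + a q p) + t * t * a q q"
proof -
  have two_point: "(\<Sum>k<n. f k) = f p + f q" if "\<And>k. k \<noteq> p \<Longrightarrow> k \<noteq> q \<Longrightarrow> f k = 0"
    for f :: "nat \<Rightarrow> 'a"
  proof -
    have "(\<Sum>k<n. f k) = (\<Sum>k\<in>{p, q}. f k)"
      by (rule sum.mono_neutral_right) (use assms that in auto)
    then show ?thesis
      using assms by simp
  qed
  show ?thesis
    unfolding quad_form_def using assms
    by (simp add: two_point algebra_simps)
qed

lemma psd_row_zero_if_diag_zero:
  fixes a :: "nat \<Rightarrow> nat \<Rightarrow> 'a::linordered_field"
  assumes p: "psd_fun n a" and s: "sym_fun n a" and a0: "a 0 0 = 0" and j: "j < n"
  shows "a 0 j = 0"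
proof (rule ccontr)
  assume a0j: "a 0 j \<noteq> 0"
  then have "j \<noteq> 0"
    using a0 by metis
  define t where "t = - (a j j + 1) / (2 * a 0 j)"
  have "0 \<le> quad_form n a (\<lambda>k. if k = 0 then t else if k = j then 1 else 0)"
    using p by (simp add: psd_fun_def)
  also have "\<dots> = t * t * a 0 0 + t * 1 * (a 0 j + a j 0) + 1 * 1 * a j j"
    by (rule quad_form_two_point) (use j \<open>j \<noteq> 0\<close> in auto)
  also have "\<dots> = -1"
    using a0 s j a0j by (simp add: sym_fun_def t_def field_simps)
  finally show False
    by simp
qed

lemma det_le_prod_diag_psd:
  fixes a :: "nat \<Rightarrow> nat \<Rightarrow> 'a::linordered_field"
  shows "psd_fun n a \<Longrightarrow> sym_fun n a \<Longrightarrow> det (mat_fun n a) \<le> (\<Prod>i<n. a i i)"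
proof (induction n arbitrary: a)
  case 0
  then show ?case
    by (simp add: det_dim_zero[OF mat_fun_carrier])
next
  case (Suc n)
  have diag: "0 \<le> a i i" if "i < Suc n" for i
    using psd_diag_nonneg[OF Suc.prems(1) that] .
  show ?case
  proof (cases "a 0 0 = 0")
    case True
    have "det (mat_fun (Suc n) a) = 0"
      by (subst det_mat_fun_first_col)
        (use psd_row_zero_if_diag_zero[OF Suc.prems True] Suc.prems(2) True
          in \<open>auto simp: sym_fun_def\<close>)
    moreover have "0 \<le> (\<Prod>i<Suc n. a i i)"
      using diag by (intro prod_nonneg) auto
    ultimately show ?thesis
      by simp
  next
    case False
    then have a0: "0 < a 0 0"
      using diag[of 0] by simp
    have schur_diag: "0 \<le> schur_compl a i i \<and> schur_compl a i i \<le> a (Suc i) (Suc i)" if "i < n" for i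
    proof -
      have "schur_compl a i i = a (Suc i) (Suc i) - (a 0 (Suc i))\<^sup>2 / a 0 0"
        using Suc.prems(2) that by (simp add: schur_compl_def sym_fun_def power2_eq_square)
      moreover have "0 \<le> schur_compl a i i"
        using psd_diag_nonneg[OF psd_schur_compl[OF Suc.prems False] that] .
      ultimately show ?thesis
        using a0 by simp
    qed
    have "det (mat_fun (Suc n) a) = a 0 0 * det (mat_fun n (schur_compl a))"
      by (rule det_schur_compl[of a n, OF False])
    also have "\<dots> \<le> a 0 0 * (\<Prod>i<n. schur_compl a i i)"
      using Suc.IH[OF psd_schur_compl[OF Suc.prems False] sym_schur_compl[OF Suc.prems(2)]] a0
      by simp
    also have "\<dots> \<le> a 0 0 * (\<Prod>i<n. a (Suc i) (Suc i))"
      using a0 schur_diag by (intro mult_left_mono prod_mono) auto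
    also have "\<dots> = (\<Prod>i<Suc n. a i i)"
      by (simp only: prod.lessThan_Suc_shift)
    finally show ?thesis .
  qed
qed

lemma prod_le_mean_power:
  fixes x :: "nat \<Rightarrow> real"
  assumes "0 < n" "\<And>i. i < n \<Longrightarrow> 0 \<le> x i"
  shows "(\<Prod>i<n. x i) \<le> ((\<Sum>i<n. x i) / n) ^ n"
proof -
  have P: "0 \<le> (\<Prod>i<n. x i)"
    using assms by (intro prod_nonneg) auto
  have "(\<Prod>i<n. x i) = ((\<Prod>i<n. x i) powr (1 / n)) ^ n"
  proof (cases "(\<Prod>i<n. x i) = 0")
    case True
    then show ?thesis
      using assms(1) by (simp only: True) simp
  next
    case False
    then have pos: "0 < (\<Prod>i<n. x i)"
      using P by linarith
    have "((\<Prod>i<n. x i) powr (1 / n)) ^ n = ((\<Prod>i<n. x i) powr (1 / n)) powr n"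
      by (metis pos powr_realpow powr_gt_zero less_irrefl)
    also have "\<dots> = (\<Prod>i<n. x i)"
      using assms(1) pos by (simp add: powr_powr)
    finally show ?thesis ..
  qed
  also have "\<dots> \<le> ((\<Sum>i<n. x i) / n) ^ n"
    using arith_geom_mean[of "{..<n}" x] assms
    by (intro power_mono) (auto simp: sum_divide_distrib)
  finally show ?thesis .
qed

lemma det_le_mean_diag_power:
  fixes a :: "nat \<Rightarrow> nat \<Rightarrow> real"
  assumes "psd_fun n a" "sym_fun n a" "0 < n"
  shows "det (mat_fun n a) \<le> ((\<Sum>i<n. a i i) / n) ^ n"
  using det_le_prod_diag_psd[OF assms(1,2)] prod_le_mean_power[OF assms(3), of "\<lambda>i. a i i"]
    psd_diag_nonneg[OF assms(1)]
  by fastforce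

section \<open>Deflation of an eigenvalue\<close>

definition sym_involution :: "nat \<Rightarrow> (nat \<Rightarrow> nat \<Rightarrow> 'a::comm_semiring_1) \<Rightarrow> bool" where
  "sym_involution n h \<longleftrightarrow> sym_fun n h \<and> (\<forall>i<n. \<forall>j<n. (\<Sum>k<n. h i k * h k j) = of_bool (i = j))"

definition conj_fun ::
    "nat \<Rightarrow> (nat \<Rightarrow> nat \<Rightarrow> 'a::comm_semiring_1) \<Rightarrow> (nat \<Rightarrow> nat \<Rightarrow> 'a) \<Rightarrow> nat \<Rightarrow> nat \<Rightarrow> 'a" where
  "conj_fun n h a i j = (\<Sum>k<n. \<Sum>l<n. h i k * a k l * h l j)"

text \<open>The reflection in the hyperplane orthogonal to \<open>u - e\<^sub>0\<close> exchanges \<open>e\<^sub>0\<close> and \<open>u\<close>.\<close>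
lemma householder_involution:
  fixes u :: "nat \<Rightarrow> real"
  assumes n: "0 < n" and u: "(\<Sum>i<n. (u i)\<^sup>2) = 1"
  obtains h where "sym_involution n h" "\<And>i. i < n \<Longrightarrow> h i 0 = u i"
proof -
  define z where "z i = u i - of_bool (i = 0)" for i
  define s where "s = (\<Sum>i<n. (z i)\<^sup>2)"
  have "s = (\<Sum>i<n. (u i)\<^sup>2 - 2 * (of_bool (0 = i) * u i) + of_bool (0 = i) * 1)"
    unfolding s_def z_def by (rule sum.cong) (auto simp: power2_eq_square algebra_simps)
  also have "\<dots> = 2 - 2 * u 0"
    using n u by (simp add: sum.distrib sum_subtractf sum_distrib_left[symmetric])
  finally have s2: "s = 2 - 2 * u 0" .
  show thesis
  proof (cases "s = 0")
    case True
    then have "\<forall>i\<in>{..<n}. (z i)\<^sup>2 = 0"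
      unfolding s_def by (subst (asm) sum_nonneg_eq_0_iff) auto
    then have "u i = of_bool (i = 0)" if "i < n" for i
      using that by (simp add: z_def)
    then show thesis
      by (intro that[of "\<lambda>i j. of_bool (i = j)"]) (auto simp: sym_involution_def sym_fun_def)
  next
    case False
    define h where "h i j = of_bool (i = j) - 2 * z i * z j / s" for i j
    have "(\<Sum>k<n. h i k * h k j) = of_bool (i = j)" if ij: "i < n" "j < n" for i j
    proof -
      have "(\<Sum>k<n. h i k * h k j) = (\<Sum>k<n. of_bool (i = k) * of_bool (k = j)
          - of_bool (i = k) * (2 * z k * z j / s) - (2 * z i * z k / s) * of_bool (k = j)
          + (4 * z i * z j / s\<^sup>2) * (z k)\<^sup>2)"
        by (rule sum.cong) (auto simp: h_def algebra_simps power2_eq_square)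
      also have "\<dots> = of_bool (i = j) - 2 * z i * z j / s - 2 * z i * z j / s
          + (4 * z i * z j / s\<^sup>2) * s"
      proof -
        have "(\<Sum>k<n. of_bool (i = k) * of_bool (k = j)) = (of_bool (i = j) :: real)"
          using ij by simp
        moreover have "(\<Sum>k<n. of_bool (i = k) * (2 * z k * z j / s)) = 2 * z i * z j / s"
          by (rule sum_of_bool_eq_mult(1)[OF ij(1)])
        moreover have "(\<Sum>k<n. (2 * z i * z k / s) * of_bool (k = j)) = 2 * z i * z j / s"
          by (rule sum_of_bool_eq_mult(2)[OF ij(2)])
        moreover have "(\<Sum>k<n. (4 * z i * z j / s\<^sup>2) * (z k)\<^sup>2) = (4 * z i * z j / s\<^sup>2) * s"
          by (simp add: s_def sum_distrib_left)
        ultimately show ?thesis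
          by (simp only: sum.distrib sum_subtractf)
      qed
      also have "\<dots> = of_bool (i = j)"
        using False by (simp add: field_simps power2_eq_square)
      finally show ?thesis .
    qed
    moreover have "h i 0 = u i" for i
    proof -
      have "h i 0 = of_bool (i = 0) - 2 * z i * (u 0 - 1) / (2 - 2 * u 0)"
        by (simp add: h_def z_def s2)
      also have "\<dots> = of_bool (i = 0) + z i"
        using False s2 by (simp add: field_simps)
      finally show ?thesis
        by (simp add: z_def)
    qed
    ultimately show thesis
      by (intro that[of h]) (auto simp: sym_involution_def sym_fun_def h_def)
  qed
qed

lemma mat_fun_conj_fun:
  "mat_fun n (conj_fun n h a) = mat_fun n h * mat_fun n a * mat_fun n h"
proof -
  have "mat_fun n h * mat_fun n a = mat_fun n (\<lambda>i l. \<Sum>k<n. h i k * a k l)"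
    by (rule eq_matI) (auto simp: scalar_prod_def lessThan_atLeast0)
  moreover have "mat_fun n (\<lambda>i l. \<Sum>k<n. h i k * a k l) * mat_fun n h = mat_fun n (conj_fun n h a)"
  proof (rule eq_matI)
    fix i j assume "i < dim_row (mat_fun n (conj_fun n h a))" "j < dim_col (mat_fun n (conj_fun n h a))"
    then have ij: "i < n" "j < n" by auto
    have "(mat_fun n (\<lambda>i l. \<Sum>k<n. h i k * a k l) * mat_fun n h) $$ (i, j)
        = (\<Sum>l<n. \<Sum>k<n. h i k * a k l * h l j)"
      by (simp add: index_mult_mat_fun[OF ij] sum_distrib_right)
    also have "\<dots> = conj_fun n h a i j"
      unfolding conj_fun_def by (rule sum.swap)
    finally show "(mat_fun n (\<lambda>i l. \<Sum>k<n. h i k * a k l) * mat_fun n h) $$ (i, j)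
        = mat_fun n (conj_fun n h a) $$ (i, j)"
      using ij by simp
  qed auto
  ultimately show ?thesis
    by simp
qed

lemma det_conj_fun:
  fixes h a :: "nat \<Rightarrow> nat \<Rightarrow> 'a::comm_ring_1"
  assumes "sym_involution n h"
  shows "det (mat_fun n (conj_fun n h a)) = det (mat_fun n a)"
proof -
  have "mat_fun n h * mat_fun n h = 1\<^sub>m n"
    using assms by (intro eq_matI) (auto simp: index_mult_mat_fun sym_involution_def simp del: index_mult_mat(1))
  then have "det (mat_fun n h) * det (mat_fun n h) = 1"
    by (metis det_mult det_one mat_fun_carrier)
  moreover have "det (mat_fun n h * mat_fun n a * mat_fun n h) = det (mat_fun n h * mat_fun n a) * det (mat_fun n h)"
    by (rule det_mult) (auto intro: mult_carrier_mat)
  moreover have "det (mat_fun n h * mat_fun n a) = det (mat_fun n h) * det (mat_fun n a)"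
    by (rule det_mult) auto
  ultimately show ?thesis
    unfolding mat_fun_conj_fun by (simp add: mult_ac)
qed

lemma sum_swap3:
  "(\<Sum>x\<in>X. \<Sum>y\<in>Y. \<Sum>z\<in>Z. g x y z) = (\<Sum>y\<in>Y. \<Sum>z\<in>Z. \<Sum>x\<in>X. g x y z)"
  by (rule trans[OF sum.swap]) (rule sum.cong[OF refl], rule sum.swap)

lemma quad_form_conj_fun:
  assumes "sym_fun n h"
  shows "quad_form n (conj_fun n h a) y = quad_form n a (\<lambda>k. \<Sum>i<n. h k i * y i)"
proof -
  have "quad_form n (conj_fun n h a) y
      = (\<Sum>i<n. \<Sum>j<n. \<Sum>k<n. \<Sum>l<n. h i k * a k l * h l j * y i * y j)"
    unfolding quad_form_def conj_fun_def by (simp add: sum_distrib_right)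
  also have "\<dots> = (\<Sum>k<n. \<Sum>l<n. \<Sum>i<n. \<Sum>j<n. h i k * a k l * h l j * y i * y j)"
    by (subst sum_swap3) (intro sum.cong refl sum_swap3)
  also have "\<dots> = (\<Sum>k<n. \<Sum>l<n. a k l * (\<Sum>i<n. h k i * y i) * (\<Sum>j<n. h l j * y j))"
  proof (intro sum.cong refl)
    fix k l assume k: "k \<in> {..<n}"
    have "h i k = h k i" if "i < n" for i
      using assms k that by (simp add: sym_fun_def)
    then have "(\<Sum>i<n. \<Sum>j<n. h i k * a k l * h l j * y i * y j)
        = (\<Sum>i<n. \<Sum>j<n. a k l * (h k i * y i) * (h l j * y j))"
      by (intro sum.cong refl) (simp add: mult_ac)
    also have "\<dots> = (\<Sum>i<n. a k l * (h k i * y i)) * (\<Sum>j<n. h l j * y j)"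
      by (rule sum_product[symmetric])
    also have "\<dots> = a k l * (\<Sum>i<n. h k i * y i) * (\<Sum>j<n. h l j * y j)"
      by (simp add: sum_distrib_left)
    finally show "(\<Sum>i<n. \<Sum>j<n. h i k * a k l * h l j * y i * y j)
        = a k l * (\<Sum>i<n. h k i * y i) * (\<Sum>j<n. h l j * y j)" .
  qed
  finally show ?thesis
    unfolding quad_form_def .
qed

lemma psd_conj_fun: "sym_fun n h \<Longrightarrow> psd_fun n a \<Longrightarrow> psd_fun n (conj_fun n h a)"
  by (simp add: psd_fun_def quad_form_conj_fun)

lemma sym_conj_fun:
  assumes "sym_fun n h" "sym_fun n a"
  shows "sym_fun n (conj_fun n h a)"
  unfolding sym_fun_def
proof (intro allI impI)
  fix i j assume "i < n" "j < n"
  then show "conj_fun n h a i j = conj_fun n h a j i"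
    unfolding conj_fun_def using assms
    by (subst sum.swap) (auto simp: sym_fun_def mult_ac intro!: sum.cong)
qed

lemma trace_conj_fun:
  assumes "sym_involution n h"
  shows "(\<Sum>i<n. conj_fun n h a i i) = (\<Sum>i<n. a i i)"
proof -
  have "(\<Sum>i<n. conj_fun n h a i i) = (\<Sum>k<n. \<Sum>l<n. a k l * (\<Sum>i<n. h l i * h i k))"
    unfolding conj_fun_def sum_distrib_left
    by (subst sum_swap3) (simp add: mult_ac)
  also have "\<dots> = (\<Sum>k<n. \<Sum>l<n. a k l * of_bool (l = k))"
    using assms by (intro sum.cong refl) (simp add: sym_involution_def)
  also have "\<dots> = (\<Sum>k<n. a k k)"
    by simp
  finally show ?thesis .
qed

lemma quad_form_eigenvector:
  assumes "\<And>i. i < n \<Longrightarrow> (\<Sum>j<n. a i j * u j) = \<mu> * u i"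
  shows "quad_form n a u = \<mu> * (\<Sum>i<n. (u i)\<^sup>2)"
proof -
  have "quad_form n a u = (\<Sum>i<n. u i * (\<Sum>j<n. a i j * u j))"
    unfolding quad_form_def by (simp add: sum_distrib_left mult_ac)
  also have "\<dots> = \<mu> * (\<Sum>i<n. (u i)\<^sup>2)"
    using assms by (simp add: sum_distrib_left power2_eq_square mult_ac)
  finally show ?thesis .
qed

lemma eigenvalue_nonneg_if_psd:
  fixes a :: "nat \<Rightarrow> nat \<Rightarrow> real"
  assumes "psd_fun n a" "(\<Sum>i<n. (u i)\<^sup>2) = 1"
    and "\<And>i. i < n \<Longrightarrow> (\<Sum>j<n. a i j * u j) = \<mu> * u i"
  shows "0 \<le> \<mu>"
proof -
  have "0 \<le> quad_form n a u"
    using assms(1) by (simp add: psd_fun_def)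
  then show ?thesis
    using assms(2,3) quad_form_eigenvector[of n a u \<mu>] by simp
qed

text \<open>Conjugating by the Householder involution that maps \<open>e\<^sub>0\<close> to the eigenvector splits off \<open>\<mu>\<close>.\<close>
lemma eigenvalue_deflation:
  fixes a :: "nat \<Rightarrow> nat \<Rightarrow> real"
  assumes psd: "psd_fun (Suc m) a" and sym: "sym_fun (Suc m) a"
    and unit: "(\<Sum>i<Suc m. (u i)\<^sup>2) = 1"
    and eigen: "\<And>i. i < Suc m \<Longrightarrow> (\<Sum>j<Suc m. a i j * u j) = \<mu> * u i"
  obtains b where "psd_fun m b" "sym_fun m b" "(\<Sum>i<m. b i i) = (\<Sum>i<Suc m. a i i) - \<mu>"
    "det (mat_fun (Suc m) a) = \<mu> * det (mat_fun m b)"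
proof -
  obtain h where h: "sym_involution (Suc m) h" and h0: "\<And>i. i < Suc m \<Longrightarrow> h i 0 = u i"
    using householder_involution[OF zero_less_Suc unit] by blast
  define c where "c = conj_fun (Suc m) h a"
  have col0: "c i 0 = \<mu> * of_bool (i = 0)" if "i < Suc m" for i
  proof -
    have "c i 0 = (\<Sum>k<Suc m. h i k * (\<Sum>l<Suc m. a k l * u l))"
      unfolding c_def conj_fun_def
      by (intro sum.cong refl) (simp add: sum_distrib_left h0 mult.assoc del: sum.lessThan_Suc)
    also have "\<dots> = (\<Sum>k<Suc m. h i k * (\<mu> * u k))"
      by (intro sum.cong refl) (simp add: eigen del: sum.lessThan_Suc)
    also have "\<dots> = \<mu> * (\<Sum>k<Suc m. h i k * h k 0)"
      unfolding sum_distrib_left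
      by (intro sum.cong refl) (simp add: h0 mult_ac del: sum.lessThan_Suc)
    also have "\<dots> = \<mu> * of_bool (i = 0)"
      using h that by (simp add: sym_involution_def)
    finally show ?thesis .
  qed
  have psd_c: "psd_fun (Suc m) c" and sym_c: "sym_fun (Suc m) c"
    using h psd sym by (simp_all add: c_def sym_involution_def psd_conj_fun sym_conj_fun)
  show thesis
  proof (rule that[of "\<lambda>i j. c (Suc i) (Suc j)"])
    show "psd_fun m (\<lambda>i j. c (Suc i) (Suc j))"
      unfolding psd_fun_def
    proof
      fix y
      have "quad_form m (\<lambda>i j. c (Suc i) (Suc j)) y = quad_form (Suc m) c (case_nat 0 y)"
        by (simp add: quad_form_Suc)
      then show "0 \<le> quad_form m (\<lambda>i j. c (Suc i) (Suc j)) y"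
        using psd_c by (simp add: psd_fun_def)
    qed
    show "sym_fun m (\<lambda>i j. c (Suc i) (Suc j))"
      using sym_c unfolding sym_fun_def by (meson Suc_less_eq)
    have "(\<Sum>i<Suc m. a i i) = (\<Sum>i<Suc m. c i i)"
      unfolding c_def trace_conj_fun[OF h] ..
    also have "\<dots> = \<mu> + (\<Sum>i<m. c (Suc i) (Suc i))"
      by (simp add: sum.lessThan_Suc_shift col0 del: sum.lessThan_Suc)
    finally show "(\<Sum>i<m. c (Suc i) (Suc i)) = (\<Sum>i<Suc m. a i i) - \<mu>"
      by simp
    have "det (mat_fun (Suc m) a) = det (mat_fun (Suc m) c)"
      using h by (simp add: c_def det_conj_fun)
    also have "\<dots> = \<mu> * det (mat_fun m (\<lambda>i j. c (Suc i) (Suc j)))"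
      using col0 by (subst det_mat_fun_first_col) auto
    finally show "det (mat_fun (Suc m) a) = \<mu> * det (mat_fun m (\<lambda>i j. c (Suc i) (Suc j)))" .
  qed
qed

section \<open>Eigenvalue bounds for positive semidefinite matrices\<close>

text \<open>Cauchy-Schwarz for the Frobenius pairing of the projection \<open>I - u u\<^sup>T\<close> with \<open>b - \<nu> u u\<^sup>T\<close>.\<close>
lemma traceless_eigenvalue_bound:
  fixes b :: "nat \<Rightarrow> nat \<Rightarrow> real"
  assumes trace: "(\<Sum>i<n. b i i) = 0" and unit: "(\<Sum>i<n. (u i)\<^sup>2) = 1"
    and eigen: "\<And>i. i < n \<Longrightarrow> (\<Sum>j<n. b i j * u j) = \<nu> * u i"
  shows "real n * \<nu>\<^sup>2 \<le> (real n - 1) * (\<Sum>i<n. \<Sum>j<n. (b i j)\<^sup>2)"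
proof -
  define P where "P i j = of_bool (i = j) - u i * u j" for i j
  define M where "M i j = b i j - \<nu> * (u i * u j)" for i j
  have uu: "(\<Sum>i<n. \<Sum>j<n. (u i * u j)\<^sup>2) = 1"
    using unit by (simp add: power_mult_distrib flip: sum_distrib_left sum_distrib_right)
  have diag_uu: "(\<Sum>i<n. \<Sum>j<n. of_bool (i = j) * (u i * u j)) = 1"
    using unit by (simp add: power2_eq_square)
  have buu: "(\<Sum>i<n. \<Sum>j<n. b i j * (u i * u j)) = \<nu>"
  proof -
    have "(\<Sum>i<n. \<Sum>j<n. b i j * (u i * u j)) = (\<Sum>i<n. u i * (\<Sum>j<n. b i j * u j))"
      by (simp add: sum_distrib_left mult_ac)
    also have "\<dots> = (\<Sum>i<n. u i * (\<nu> * u i))"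
      by (intro sum.cong refl) (simp add: eigen)
    also have "\<dots> = \<nu> * (\<Sum>i<n. (u i)\<^sup>2)"
      by (simp add: sum_distrib_left power2_eq_square mult_ac)
    finally show ?thesis
      using unit by simp
  qed
  have Mu: "(\<Sum>j<n. M i j * u j) = 0" if "i < n" for i
  proof -
    have "(\<Sum>j<n. M i j * u j) = (\<Sum>j<n. b i j * u j) - \<nu> * u i * (\<Sum>j<n. (u j)\<^sup>2)"
      by (simp add: M_def algebra_simps sum_subtractf sum_distrib_left power2_eq_square)
    then show ?thesis
      using eigen[OF that] unit by simp
  qed
  have "(\<Sum>i<n. \<Sum>j<n. P i j * M i j)
      = (\<Sum>i<n. \<Sum>j<n. of_bool (i = j) * M i j) - (\<Sum>i<n. u i * (\<Sum>j<n. M i j * u j))"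
    by (simp add: P_def algebra_simps sum_subtractf sum_distrib_left)
  also have "\<dots> = (\<Sum>i<n. M i i)"
    by (simp add: Mu)
  also have "\<dots> = - \<nu>"
    using trace unit by (simp add: M_def sum_subtractf power2_eq_square flip: sum_distrib_left)
  finally have PM: "(\<Sum>i<n. \<Sum>j<n. P i j * M i j) = - \<nu>" .
  have "(\<Sum>i<n. \<Sum>j<n. (P i j)\<^sup>2) = (\<Sum>i<n. \<Sum>j<n. of_bool (i = j))
      - 2 * (\<Sum>i<n. \<Sum>j<n. of_bool (i = j) * (u i * u j)) + (\<Sum>i<n. \<Sum>j<n. (u i * u j)\<^sup>2)"
    by (simp add: P_def power2_eq_square algebra_simps sum_subtractf sum.distrib sum_distrib_left)
  also have "\<dots> = real n - 1"
    using diag_uu uu by simp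
  finally have PP: "(\<Sum>i<n. \<Sum>j<n. (P i j)\<^sup>2) = real n - 1" .
  have "(\<Sum>i<n. \<Sum>j<n. (M i j)\<^sup>2) = (\<Sum>i<n. \<Sum>j<n. (b i j)\<^sup>2)
      - 2 * \<nu> * (\<Sum>i<n. \<Sum>j<n. b i j * (u i * u j)) + \<nu>\<^sup>2 * (\<Sum>i<n. \<Sum>j<n. (u i * u j)\<^sup>2)"
    by (simp add: M_def power2_eq_square algebra_simps sum_subtractf sum.distrib sum_distrib_left)
  also have "\<dots> = (\<Sum>i<n. \<Sum>j<n. (b i j)\<^sup>2) - \<nu>\<^sup>2"
    using buu uu by (simp add: power2_eq_square)
  finally have MM: "(\<Sum>i<n. \<Sum>j<n. (M i j)\<^sup>2) = (\<Sum>i<n. \<Sum>j<n. (b i j)\<^sup>2) - \<nu>\<^sup>2" .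
  have "(\<Sum>i<n. \<Sum>j<n. P i j * M i j)\<^sup>2 \<le> (\<Sum>i<n. \<Sum>j<n. (P i j)\<^sup>2) * (\<Sum>i<n. \<Sum>j<n. (M i j)\<^sup>2)"
    using Cauchy_Schwarz_ineq_sum[of "\<lambda>p. P (fst p) (snd p)" "\<lambda>p. M (fst p) (snd p)" "{..<n} \<times> {..<n}"]
    by (simp add: sum.cartesian_product case_prod_beta')
  then have "\<nu>\<^sup>2 \<le> (real n - 1) * ((\<Sum>i<n. \<Sum>j<n. (b i j)\<^sup>2) - \<nu>\<^sup>2)"
    unfolding PM PP MM by simp
  then show ?thesis
    by (simp add: algebra_simps)
qed

lemma eigenvalue_deviation_bound:
  fixes a :: "nat \<Rightarrow> nat \<Rightarrow> real"
  assumes unit: "(\<Sum>i<n. (u i)\<^sup>2) = 1"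
    and eigen: "\<And>i. i < n \<Longrightarrow> (\<Sum>j<n. a i j * u j) = \<mu> * u i"
  shows "(real n * \<mu> - (\<Sum>i<n. a i i))\<^sup>2
    \<le> (real n - 1) * (real n * (\<Sum>i<n. \<Sum>j<n. (a i j)\<^sup>2) - (\<Sum>i<n. a i i)\<^sup>2)"
proof -
  define T where "T = (\<Sum>i<n. a i i)"
  define t where "t = T / n"
  define b where "b i j = a i j - t * of_bool (i = j)" for i j
  have n: "0 < n"
    using unit by (cases n) auto
  have trace_b: "(\<Sum>i<n. b i i) = 0"
    using n by (simp add: b_def sum_subtractf T_def t_def)
  have eigen_b: "(\<Sum>j<n. b i j * u j) = (\<mu> - t) * u i" if "i < n" for i
  proof -
    have "(\<Sum>j<n. b i j * u j) = (\<Sum>j<n. a i j * u j - t * (of_bool (i = j) * u j))"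
      by (intro sum.cong refl) (simp add: b_def algebra_simps)
    also have "\<dots> = (\<Sum>j<n. a i j * u j) - t * (\<Sum>j<n. of_bool (i = j) * u j)"
      by (simp only: sum_subtractf sum_distrib_left)
    also have "(\<Sum>j<n. of_bool (i = j) * u j) = u i"
      using that by (rule sum_of_bool_eq_mult(1))
    finally show ?thesis
      using eigen[OF that] by (simp add: algebra_simps)
  qed
  have "real n * (\<mu> - t)\<^sup>2 \<le> (real n - 1) * (\<Sum>i<n. \<Sum>j<n. (b i j)\<^sup>2)"
    by (rule traceless_eigenvalue_bound[OF trace_b unit eigen_b])
  moreover have "(\<Sum>i<n. \<Sum>j<n. (b i j)\<^sup>2) = (\<Sum>i<n. \<Sum>j<n. (a i j)\<^sup>2) - T\<^sup>2 / n"
  proof -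
    have sq: "(b i j)\<^sup>2 = (a i j)\<^sup>2 - 2 * t * (of_bool (i = j) * a i j) + t\<^sup>2 * of_bool (i = j)"
      for i j
      by (cases "i = j") (simp_all add: b_def power2_eq_square algebra_simps)
    have diag: "(\<Sum>i<n. \<Sum>j<n. of_bool (i = j) * a i j) = T"
      by (simp add: T_def)
    have count: "(\<Sum>i<n. \<Sum>j<n. of_bool (i = j) :: real) = n"
      by (simp add: of_bool_def)
    have "(\<Sum>i<n. \<Sum>j<n. (b i j)\<^sup>2) = (\<Sum>i<n. \<Sum>j<n. (a i j)\<^sup>2)
        - 2 * t * (\<Sum>i<n. \<Sum>j<n. of_bool (i = j) * a i j) + t\<^sup>2 * (\<Sum>i<n. \<Sum>j<n. of_bool (i = j))"
      by (simp only: sq sum.distrib sum_subtractf sum_distrib_left)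
    also have "\<dots> = (\<Sum>i<n. \<Sum>j<n. (a i j)\<^sup>2) - 2 * t * T + t\<^sup>2 * n"
      by (simp only: diag count)
    finally have "(\<Sum>i<n. \<Sum>j<n. (b i j)\<^sup>2) = (\<Sum>i<n. \<Sum>j<n. (a i j)\<^sup>2) - 2 * t * T + t\<^sup>2 * n" .
    then show ?thesis
      using n by (simp add: T_def t_def power2_eq_square field_simps)
  qed
  ultimately have "real n * (\<mu> - t)\<^sup>2 \<le> (real n - 1) * ((\<Sum>i<n. \<Sum>j<n. (a i j)\<^sup>2) - T\<^sup>2 / n)"
    by simp
  then have "real n * (real n * (\<mu> - t)\<^sup>2)
      \<le> real n * ((real n - 1) * ((\<Sum>i<n. \<Sum>j<n. (a i j)\<^sup>2) - T\<^sup>2 / n))"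
    by (rule mult_left_mono) simp
  moreover have "real n * (real n * (\<mu> - t)\<^sup>2) = (real n * \<mu> - T)\<^sup>2"
    using n by (simp add: t_def power2_eq_square field_simps)
  moreover have "real n * ((real n - 1) * ((\<Sum>i<n. \<Sum>j<n. (a i j)\<^sup>2) - T\<^sup>2 / n))
      = (real n - 1) * (real n * (\<Sum>i<n. \<Sum>j<n. (a i j)\<^sup>2) - T\<^sup>2)"
    using n by (simp add: field_simps)
  ultimately show ?thesis
    unfolding T_def[symmetric] by linarith
qed

lemma trace_sq_le_frobenius:
  fixes a :: "nat \<Rightarrow> nat \<Rightarrow> real"
  shows "(\<Sum>i<n. a i i)\<^sup>2 \<le> real n * (\<Sum>i<n. \<Sum>j<n. (a i j)\<^sup>2)"
proof -
  have "(\<Sum>i<n. 1 * a i i)\<^sup>2 \<le> (\<Sum>i<n. 1\<^sup>2) * (\<Sum>i<n. (a i i)\<^sup>2)"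
    by (rule Cauchy_Schwarz_ineq_sum)
  moreover have "(\<Sum>i<n. (a i i)\<^sup>2) \<le> (\<Sum>i<n. \<Sum>j<n. (a i j)\<^sup>2)"
    by (intro sum_mono member_le_sum) auto
  ultimately show ?thesis
    by (simp add: order_trans mult_left_mono)
qed

lemma eigenvalue_mat_funE:
  fixes a :: "nat \<Rightarrow> nat \<Rightarrow> real"
  assumes "eigenvalue (mat_fun n a) \<mu>"
  obtains u where "(\<Sum>i<n. (u i)\<^sup>2) = 1" "\<And>i. i < n \<Longrightarrow> (\<Sum>j<n. a i j * u j) = \<mu> * u i"
proof -
  obtain v where v: "v \<in> carrier_vec n" "v \<noteq> 0\<^sub>v n" "mat_fun n a *\<^sub>v v = \<mu> \<cdot>\<^sub>v v"
    using assms unfolding eigenvalue_def eigenvector_def by auto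
  have eigen: "(\<Sum>j<n. a i j * vec_index v j) = \<mu> * vec_index v i" if "i < n" for i
    using arg_cong[OF v(3), of "\<lambda>w. vec_index w i"] that v(1)
    by (simp add: scalar_prod_def lessThan_atLeast0)
  obtain i0 where i0: "i0 < n" "vec_index v i0 \<noteq> 0"
    using v(1,2) by (metis dim_vec eq_vecI carrier_vecD index_zero_vec)
  define r where "r = sqrt (\<Sum>i<n. (vec_index v i)\<^sup>2)"
  have "(vec_index v i0)\<^sup>2 \<le> (\<Sum>i<n. (vec_index v i)\<^sup>2)"
    using i0 by (intro member_le_sum) auto
  then have r: "0 < r"
    using i0 by (simp add: r_def order_less_le_trans[OF zero_less_power2[THEN iffD2]])
  show thesis
  proof (rule that[of "\<lambda>i. vec_index v i / r"])
    show "(\<Sum>i<n. (vec_index v i / r)\<^sup>2) = 1"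
      using r by (simp add: power_divide r_def flip: sum_divide_distrib)
    show "(\<Sum>j<n. a i j * (vec_index v j / r)) = \<mu> * (vec_index v i / r)" if "i < n" for i
      using eigen[OF that] by (simp add: sum_divide_distrib[symmetric])
  qed
qed

lemma psd_eigenvalue_bounds:
  fixes a :: "nat \<Rightarrow> nat \<Rightarrow> real"
  assumes psd: "psd_fun n a" and sym: "sym_fun n a" and n: "2 \<le> n"
    and eig: "eigenvalue (mat_fun n a) \<mu>"
  defines "T \<equiv> \<Sum>i<n. a i i"
    and "W \<equiv> real n * (\<Sum>i<n. \<Sum>j<n. (a i j)\<^sup>2) - (\<Sum>i<n. a i i)\<^sup>2"
  shows "0 \<le> \<mu>" and "\<mu> \<le> (T + sqrt ((real n - 1) * W)) / n"
    and "det (mat_fun n a) \<le> \<mu> * ((T + sqrt (W / (real n - 1))) / n) ^ (n - 1)"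
proof -
  obtain u where unit: "(\<Sum>i<n. (u i)\<^sup>2) = 1"
    and eigen: "\<And>i. i < n \<Longrightarrow> (\<Sum>j<n. a i j * u j) = \<mu> * u i"
    using eigenvalue_mat_funE[OF eig] by blast
  show \<mu>0: "0 \<le> \<mu>"
    by (rule eigenvalue_nonneg_if_psd[OF psd unit eigen])
  have "sqrt ((real n * \<mu> - T)\<^sup>2) \<le> sqrt ((real n - 1) * W)"
    using eigenvalue_deviation_bound[OF unit eigen] unfolding T_def W_def
    by (rule real_sqrt_le_mono)
  then have "\<bar>real n * \<mu> - T\<bar> \<le> sqrt ((real n - 1) * W)"
    by simp
  then have dev: "real n * \<mu> \<le> T + sqrt ((real n - 1) * W)" "T - sqrt ((real n - 1) * W) \<le> real n * \<mu>"
    by linarith+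
  then show "\<mu> \<le> (T + sqrt ((real n - 1) * W)) / n"
    using n by (simp add: field_simps)
  obtain m where m: "n = Suc m" "0 < m"
    using n by (cases n) auto
  obtain b where psd_b: "psd_fun m b" and sym_b: "sym_fun m b"
    and trace_b: "(\<Sum>i<m. b i i) = T - \<mu>" and det_b: "det (mat_fun n a) = \<mu> * det (mat_fun m b)"
    using eigenvalue_deflation[of m a u \<mu>] psd sym unit eigen unfolding m(1) T_def by blast
  have "0 \<le> T - \<mu>"
    unfolding trace_b[symmetric] using psd_diag_nonneg[OF psd_b] by (intro sum_nonneg) auto
  moreover have "(T - \<mu>) / m \<le> (T + sqrt (W / m)) / n"
  proof -
    have "(real n - 1) * W = (real m)\<^sup>2 * (W / m)"
      using m by (simp add: power2_eq_square)
    then have "sqrt ((real n - 1) * W) = m * sqrt (W / m)"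
      by (simp only: real_sqrt_mult real_sqrt_abs abs_of_nat)
    then have "real n * (T - \<mu>) \<le> m * (T + sqrt (W / m))"
      using dev(2) m(1) by (simp add: algebra_simps)
    then show ?thesis
      using m by (simp add: field_simps)
  qed
  ultimately have "((T - \<mu>) / m) ^ m \<le> ((T + sqrt (W / m)) / n) ^ m"
    by (intro power_mono) simp_all
  then have "det (mat_fun m b) \<le> ((T + sqrt (W / m)) / n) ^ m"
    using det_le_mean_diag_power[OF psd_b sym_b m(2)] trace_b by simp
  then show "det (mat_fun n a) \<le> \<mu> * ((T + sqrt (W / (real n - 1))) / n) ^ (n - 1)"
    using det_b \<mu>0 m(1) by (simp add: mult_left_mono)
qed

section \<open>Cauchy matrices\<close>

definition cauchy :: "(nat \<Rightarrow> 'a::field) \<Rightarrow> nat \<Rightarrow> nat \<Rightarrow> 'a" where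
  "cauchy x i j = 1 / (x i + x j)"

definition vandermonde_sq :: "nat \<Rightarrow> (nat \<Rightarrow> 'a::comm_ring_1) \<Rightarrow> 'a" where
  "vandermonde_sq n x = (\<Prod>j<n. \<Prod>i<j. (x i - x j)\<^sup>2)"

definition pair_sum_prod :: "nat \<Rightarrow> (nat \<Rightarrow> 'a::comm_semiring_1) \<Rightarrow> 'a" where
  "pair_sum_prod n x = (\<Prod>i<n. \<Prod>j<n. x i + x j)"

lemma quad_form_scale: "quad_form n (\<lambda>i j. d i * d j * c i j) y = quad_form n c (\<lambda>i. d i * y i)"
  by (simp add: quad_form_def mult_ac)

lemma det_mat_fun_scale:
  fixes c :: "nat \<Rightarrow> nat \<Rightarrow> 'a::comm_ring_1"
  shows "det (mat_fun n (\<lambda>i j. d i * d j * c i j)) = (\<Prod>i<n. d i)\<^sup>2 * det (mat_fun n c)"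
proof -
  have "det (mat_fun n (\<lambda>i j. d i * d j * c i j))
      = (\<Sum>p\<in>{p. p permutes {0..<n}}. signof p * (\<Prod>i=0..<n. d i * d (p i) * c i (p i)))"
    by (subst det_def'[OF mat_fun_carrier]) (intro sum.cong refl, simp add: permutes_def)
  also have "\<dots> = (\<Sum>p\<in>{p. p permutes {0..<n}}. (\<Prod>i<n. d i)\<^sup>2 * (signof p * (\<Prod>i=0..<n. c i (p i))))"
  proof (intro sum.cong refl)
    fix p assume "p \<in> {p. p permutes {0..<n}}"
    then have "(\<Prod>i=0..<n. d (p i)) = (\<Prod>i=0..<n. d i)"
      using prod.permute[of p "{0..<n}" d] by (simp add: comp_def)
    then show "signof p * (\<Prod>i=0..<n. d i * d (p i) * c i (p i))
        = (\<Prod>i<n. d i)\<^sup>2 * (signof p * (\<Prod>i=0..<n. c i (p i)))"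
      by (simp add: prod.distrib power2_eq_square lessThan_atLeast0)
  qed
  also have "\<dots> = (\<Prod>i<n. d i)\<^sup>2 * det (mat_fun n c)"
    by (subst det_def'[OF mat_fun_carrier]) (simp add: sum_distrib_left)
  finally show ?thesis .
qed

lemma schur_compl_cauchy:
  fixes x :: "nat \<Rightarrow> 'a::field"
  assumes x: "\<And>i j. i < Suc n \<Longrightarrow> j < Suc n \<Longrightarrow> x i + x j \<noteq> 0" and ij: "i < n" "j < n"
  shows "schur_compl (cauchy x) i j = (x (Suc i) - x 0) / (x (Suc i) + x 0)
      * ((x (Suc j) - x 0) / (x (Suc j) + x 0)) * cauchy (\<lambda>k. x (Suc k)) i j"
proof -
  have nonzero: "x 0 + x 0 \<noteq> 0" "x (Suc i) + x 0 \<noteq> 0" "x 0 + x (Suc j) \<noteq> 0"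
    "x (Suc j) + x 0 \<noteq> 0" "x (Suc i) + x (Suc j) \<noteq> 0"
    by (rule x; use ij in simp)+
  have x0: "x 0 \<noteq> 0" "(2::'a) \<noteq> 0"
    using nonzero(1) by (metis add.right_neutral, metis mult_2 mult_zero_left)
  show ?thesis
    unfolding schur_compl_def cauchy_def
    by (simp add: divide_simps nonzero x0) (simp add: algebra_simps nonzero x0)
qed

lemma psd_cauchy:
  fixes x :: "nat \<Rightarrow> 'a::linordered_field"
  shows "(\<And>i. i < n \<Longrightarrow> 0 < x i) \<Longrightarrow> psd_fun n (cauchy x)"
proof (induction n arbitrary: x)
  case 0
  then show ?case
    by (simp add: psd_fun_def quad_form_def)
next
  case (Suc n)
  have x0: "0 < x 0"
    using Suc.prems by auto
  have sym: "sym_fun (Suc n) (cauchy x)"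
    by (simp add: sym_fun_def cauchy_def add.commute)
  define d where "d i = (x (Suc i) - x 0) / (x (Suc i) + x 0)" for i
  have nonzero: "x i + x j \<noteq> 0" if "i < Suc n" "j < Suc n" for i j
    using Suc.prems[OF that(1)] Suc.prems[OF that(2)] by simp
  have "psd_fun n (cauchy (\<lambda>k. x (Suc k)))"
    using Suc.prems by (intro Suc.IH) auto
  moreover have "quad_form n (schur_compl (cauchy x)) z
      = quad_form n (\<lambda>i j. d i * d j * cauchy (\<lambda>k. x (Suc k)) i j) z" for z
    unfolding d_def by (intro quad_form_cong schur_compl_cauchy nonzero)
  ultimately have schur: "0 \<le> quad_form n (schur_compl (cauchy x)) z" for z
    by (simp only: quad_form_scale psd_fun_def)
  have a0: "0 < cauchy x 0 0"
    using x0 by (simp add: cauchy_def)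
  show ?case
    unfolding psd_fun_def quad_form_schur_compl[OF sym a0[THEN less_imp_neq, symmetric]]
    using a0 schur by (simp add: add_nonneg_nonneg)
qed

lemma vandermonde_sq_Suc:
  "vandermonde_sq (Suc n) x = (\<Prod>j<n. x (Suc j) - x 0)\<^sup>2 * vandermonde_sq n (\<lambda>k. x (Suc k))"
proof -
  have "vandermonde_sq (Suc n) x = (\<Prod>j<n. \<Prod>i<Suc j. (x i - x (Suc j))\<^sup>2)"
    unfolding vandermonde_sq_def by (simp add: prod.lessThan_Suc_shift del: prod.lessThan_Suc)
  also have "\<dots> = (\<Prod>j<n. (x (Suc j) - x 0)\<^sup>2 * (\<Prod>i<j. (x (Suc i) - x (Suc j))\<^sup>2))"
    by (simp add: prod.lessThan_Suc_shift power2_commute del: prod.lessThan_Suc)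
  also have "\<dots> = (\<Prod>j<n. x (Suc j) - x 0)\<^sup>2 * vandermonde_sq n (\<lambda>k. x (Suc k))"
    by (simp add: prod.distrib vandermonde_sq_def prod_power_distrib)
  finally show ?thesis .
qed

lemma pair_sum_prod_Suc:
  "pair_sum_prod (Suc n) x = (x 0 + x 0) * (\<Prod>j<n. x (Suc j) + x 0)\<^sup>2 * pair_sum_prod n (\<lambda>k. x (Suc k))"
proof -
  have "pair_sum_prod (Suc n) x = (x 0 + x 0) * (\<Prod>j<n. x 0 + x (Suc j))
      * (\<Prod>i<n. (x (Suc i) + x 0) * (\<Prod>j<n. x (Suc i) + x (Suc j)))"
    unfolding pair_sum_prod_def by (simp add: prod.lessThan_Suc_shift del: prod.lessThan_Suc)
  also have "\<dots> = (x 0 + x 0) * (\<Prod>j<n. x (Suc j) + x 0)\<^sup>2 * pair_sum_prod n (\<lambda>k. x (Suc k))"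
    by (simp add: prod.distrib pair_sum_prod_def power2_eq_square add.commute mult_ac)
  finally show ?thesis .
qed

lemma det_cauchy:
  fixes x :: "nat \<Rightarrow> 'a::field"
  shows "(\<And>i j. i < n \<Longrightarrow> j < n \<Longrightarrow> x i + x j \<noteq> 0)
    \<Longrightarrow> det (mat_fun n (cauchy x)) = vandermonde_sq n x / pair_sum_prod n x"
proof (induction n arbitrary: x)
  case 0
  then show ?case
    by (simp add: vandermonde_sq_def pair_sum_prod_def det_dim_zero[OF mat_fun_carrier])
next
  case (Suc n)
  have x0: "x 0 + x 0 \<noteq> 0"
    using Suc.prems by blast
  define d where "d i = (x (Suc i) - x 0) / (x (Suc i) + x 0)" for i
  have IH: "det (mat_fun n (cauchy (\<lambda>k. x (Suc k))))
      = vandermonde_sq n (\<lambda>k. x (Suc k)) / pair_sum_prod n (\<lambda>k. x (Suc k))"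
    using Suc.prems by (intro Suc.IH) auto
  have "det (mat_fun (Suc n) (cauchy x)) = cauchy x 0 0 * det (mat_fun n (schur_compl (cauchy x)))"
    using x0 by (intro det_schur_compl) (simp add: cauchy_def)
  also have "mat_fun n (schur_compl (cauchy x)) = mat_fun n (\<lambda>i j. d i * d j * cauchy (\<lambda>k. x (Suc k)) i j)"
    unfolding d_def by (intro mat_fun_cong schur_compl_cauchy Suc.prems)
  also have "det \<dots> = (\<Prod>i<n. d i)\<^sup>2 * det (mat_fun n (cauchy (\<lambda>k. x (Suc k))))"
    by (rule det_mat_fun_scale)
  also have "cauchy x 0 0 * \<dots> = vandermonde_sq (Suc n) x / pair_sum_prod (Suc n) x"
    unfolding IH vandermonde_sq_Suc pair_sum_prod_Suc cauchy_def d_def prod_dividef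
    by (simp add: power_divide)
  finally show ?case .
qed

lemma scaled_power_le_imp_divide_le:
  fixes c B D \<mu> :: real
  assumes "0 \<le> \<mu>" "0 \<le> c" "0 \<le> B" "0 < m" and scaled: "c ^ Suc m * D \<le> \<mu> * (c * B) ^ m"
  shows "c * D / B ^ m \<le> \<mu>"
proof (cases "c = 0 \<or> B = 0")
  case True
  then show ?thesis
    using assms(1,4) by (auto simp: zero_power)
next
  case False
  then have c_pos: "0 < c" and B_pos: "0 < B"
    using assms(2,3) by auto
  have "c ^ m * (c * D) \<le> c ^ m * (\<mu> * B ^ m)"
    using scaled by (simp add: power_mult_distrib ac_simps)
  then have "c * D \<le> \<mu> * B ^ m"
    by (rule mult_left_le_imp_le) (simp add: c_pos)
  then show ?thesis
    using B_pos by (simp add: pos_divide_le_eq)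
qed
lemma psd_fun_scale:
  fixes a :: "nat \<Rightarrow> nat \<Rightarrow> 'a::linordered_idom"
  assumes "0 \<le> c" "psd_fun n a"
  shows "psd_fun n (\<lambda>i j. c * a i j)"
proof -
  have "quad_form n (\<lambda>i j. c * a i j) y = c * quad_form n a y" for y
    by (simp add: quad_form_def sum_distrib_left mult.assoc)
  then show ?thesis
    using assms by (simp add: psd_fun_def)
qed

lemma det_mat_fun_smult:
  fixes a :: "nat \<Rightarrow> nat \<Rightarrow> 'a::comm_ring_1"
  shows "det (mat_fun n (\<lambda>i j. c * a i j)) = c ^ n * det (mat_fun n a)"
proof -
  have "mat_fun n (\<lambda>i j. c * a i j) = c \<cdot>\<^sub>m mat_fun n a"
    by (rule eq_matI) auto
  then show ?thesis
    by (simp add: det_smult)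
qed

lemma trace_cauchy: "(\<Sum>i<n. cauchy x i i) = (\<Sum>i<n. 1 / (2 * x i))"
  by (simp only: cauchy_def mult_2)

lemma frobenius_cauchy:
  fixes x :: "nat \<Rightarrow> 'a::field"
  shows "(\<Sum>i<n. \<Sum>j<n. (cauchy x i j)\<^sup>2) = (\<Sum>l<n. \<Sum>k<n. 1 / (x k + x l)\<^sup>2)"
  unfolding cauchy_def by (intro sum.cong refl) (simp add: power_divide add.commute)

lemma cauchy_eigenvalue_bounds:
  fixes x :: "nat \<Rightarrow> real"
  assumes n: "2 \<le> n" and c: "0 \<le> c" and x: "\<And>i. i < n \<Longrightarrow> 0 < x i"
    and eig: "eigenvalue (mat_fun n (\<lambda>i j. c * cauchy x i j)) \<mu>"
  defines "S \<equiv> \<Sum>i<n. 1 / (2 * x i)"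
    and "Q \<equiv> (\<Sum>l<n. \<Sum>k<n. real n / (x k + x l)\<^sup>2) - (\<Sum>i<n. 1 / (2 * x i))\<^sup>2"
  shows "c * (vandermonde_sq n x / pair_sum_prod n x) / ((S + sqrt (Q / (real n - 1))) / n) ^ (n - 1) \<le> \<mu>"
    and "\<mu> \<le> c * (S + sqrt ((real n - 1) * Q)) / n"
proof -
  let ?A = "\<lambda>i j. c * cauchy x i j"
  have psd: "psd_fun n ?A"
    using psd_fun_scale[OF c psd_cauchy[of n x, OF x]] .
  have sym: "sym_fun n ?A"
    unfolding sym_fun_def cauchy_def by (metis add.commute)
  have trace: "(\<Sum>i<n. cauchy x i i) = S"
    unfolding S_def by (rule trace_cauchy)
  have Q: "Q = real n * (\<Sum>i<n. \<Sum>j<n. (cauchy x i j)\<^sup>2) - S\<^sup>2"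
    unfolding Q_def S_def frobenius_cauchy by (simp add: sum_distrib_left)
  have "real n * (\<Sum>i<n. \<Sum>j<n. (?A i j)\<^sup>2) - (\<Sum>i<n. ?A i i)\<^sup>2 = c\<^sup>2 * Q"
    unfolding Q trace[symmetric]
    by (simp add: power_mult_distrib algebra_simps flip: sum_distrib_left)
  note bounds = psd_eigenvalue_bounds[OF psd sym n eig,
      unfolded this, unfolded sum_distrib_left[symmetric] trace]
  have \<mu>0: "0 \<le> \<mu>"
    and upper: "\<mu> \<le> (c * S + sqrt ((real n - 1) * (c\<^sup>2 * Q))) / n"
    and det: "det (mat_fun n ?A) \<le> \<mu> * ((c * S + sqrt (c\<^sup>2 * Q / (real n - 1))) / n) ^ (n - 1)"
    using bounds by simp_all
  have "sqrt ((real n - 1) * (c\<^sup>2 * Q)) = c * sqrt ((real n - 1) * Q)"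
    using c by (simp only: mult.left_commute[of _ "c\<^sup>2"] real_sqrt_mult real_sqrt_abs abs_of_nonneg)
  then have "(c * S + sqrt ((real n - 1) * (c\<^sup>2 * Q))) / n = c * (S + sqrt ((real n - 1) * Q)) / n"
    by (simp only: distrib_left)
  with upper show "\<mu> \<le> c * (S + sqrt ((real n - 1) * Q)) / n"
    by (simp only:)
  define B where "B = (S + sqrt (Q / (real n - 1))) / n"
  have "0 \<le> S"
    unfolding S_def using x by (intro sum_nonneg) (simp add: less_imp_le)
  moreover have "0 \<le> Q"
    unfolding Q trace[symmetric] by (rule trace_sq_le_frobenius[THEN diff_ge_0_iff_ge[THEN iffD2]])
  ultimately have B: "0 \<le> B"
    unfolding B_def using n by (intro divide_nonneg_nonneg add_nonneg_nonneg) simp_all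
  have "det (mat_fun n (cauchy x)) = vandermonde_sq n x / pair_sum_prod n x"
  proof (rule det_cauchy)
    show "x i + x j \<noteq> 0" if "i < n" "j < n" for i j
      using x[OF that(1)] x[OF that(2)] by simp
  qed
  then have "det (mat_fun n ?A) = c ^ n * (vandermonde_sq n x / pair_sum_prod n x)"
    by (simp add: det_mat_fun_smult)
  moreover have "sqrt (c\<^sup>2 * Q / (real n - 1)) = c * sqrt (Q / (real n - 1))"
    using c by (simp only: times_divide_eq_right[symmetric] real_sqrt_mult real_sqrt_abs abs_of_nonneg)
  then have "(c * S + sqrt (c\<^sup>2 * Q / (real n - 1))) / n = c * B"
    by (simp only: B_def times_divide_eq_right distrib_left)
  ultimately have scaled: "c ^ n * (vandermonde_sq n x / pair_sum_prod n x) \<le> \<mu> * (c * B) ^ (n - 1)"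
    using det by simp
  obtain m where m: "n = Suc m" "0 < m"
    using n by (cases n) auto
  have "c ^ Suc m * (vandermonde_sq n x / pair_sum_prod n x) \<le> \<mu> * (c * B) ^ m"
    using scaled m(1) by simp
  from scaled_power_le_imp_divide_le[OF \<mu>0 c B m(2) this]
  show "c * (vandermonde_sq n x / pair_sum_prod n x) / B ^ (n - 1) \<le> \<mu>"
    using m(1) by simp
qed

theorem theorem6p7:
  fixes d n :: nat and V :: real and \<tau> :: "nat \<Rightarrow> real"
  assumes "d \<ge> 1" and "n \<ge> 2" and "V \<ge> 0"
    and "- (real d / 2) < \<tau> 0"
    and "\<And>i j. i < j \<Longrightarrow> j < n \<Longrightarrow> \<tau> i < \<tau> j"
  shows "let x = (\<lambda>i. \<tau> i + real d / 2);
             \<kappa> = unit_ball_vol (real d);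
             Q = (\<Sum>l<n. \<Sum>k<n. real n / (x k + x l)\<^sup>2) - (\<Sum>i<n. 1 / (2 * x i))\<^sup>2;
             S_up = V * real d * \<kappa> * ((\<Sum>i<n. 1 / (2 * x i)) + sqrt ((real n - 1) * Q)) / (2 * real n);
             S_low = V * real d * \<kappa> * (\<Prod>j<n. \<Prod>i<j. (x i - x j)\<^sup>2)
                / (2 * (\<Prod>i<n. \<Prod>j<n. x i + x j)
                   * (((\<Sum>i<n. sqrt (real n - 1) / (2 * x i)) + sqrt Q) / (real n * sqrt (real n - 1))) ^ (n - 1))
         in \<forall>\<mu>. eigenvalue (Sigma_mat d n V \<tau>) \<mu> \<longrightarrow> S_low \<le> \<mu> \<and> \<mu> \<le> S_up"
proof -
  define x where "x i = \<tau> i + real d / 2" for i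
  define c where "c = V * real d * unit_ball_vol (real d) / 2"
  define S where "S = (\<Sum>i<n. 1 / (2 * x i))"
  define Q where "Q = (\<Sum>l<n. \<Sum>k<n. real n / (x k + x l)\<^sup>2) - (\<Sum>i<n. 1 / (2 * x i))\<^sup>2"
  have x_pos: "0 < x i" if "i < n" for i
    using assms(4) assms(5)[of 0 i] that unfolding x_def by (cases "i = 0") auto
  have c: "0 \<le> c"
    using assms(3) by (simp add: c_def)
  have Sigma: "Sigma_mat d n V \<tau> = mat_fun n (\<lambda>i j. c * cauchy x i j)"
    by (rule eq_matI) (simp_all add: Sigma_mat_def mat_fun_def cauchy_def c_def x_def)
  have "(\<Sum>i<n. sqrt (real n - 1) / (2 * x i)) = sqrt (real n - 1) * S"
    by (simp add: S_def sum_distrib_left)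
  then have root: "((\<Sum>i<n. sqrt (real n - 1) / (2 * x i)) + sqrt Q) / (real n * sqrt (real n - 1))
      = (S + sqrt (Q / (real n - 1))) / n"
    using assms(2) by (simp add: real_sqrt_divide field_simps)
  show ?thesis
    unfolding Let_def x_def[symmetric] Q_def[symmetric] unfolding root S_def[symmetric]
  proof (intro allI impI)
    fix \<mu> assume "eigenvalue (Sigma_mat d n V \<tau>) \<mu>"
    from cauchy_eigenvalue_bounds[OF assms(2) c x_pos this[unfolded Sigma], folded Q_def, folded S_def]
    show "V * real d * unit_ball_vol (real d) * (\<Prod>j<n. \<Prod>i<j. (x i - x j)\<^sup>2)
        / (2 * (\<Prod>i<n. \<Prod>j<n. x i + x j) * ((S + sqrt (Q / (real n - 1))) / n) ^ (n - 1)) \<le> \<mu>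
      \<and> \<mu> \<le> V * real d * unit_ball_vol (real d) * (S + sqrt ((real n - 1) * Q)) / (2 * real n)"
      by (simp add: c_def S_def vandermonde_sq_def pair_sum_prod_def mult_ac)
  qed
qed

end
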